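(* Let each $f_{i,j}$ be $L_f$-smooth with $\gamma>2\lambda>4L_f$, so that $\tilde f_{i,j}$ (hence $F_i$) is $L_{\tilde f}$-smooth with $L_{\tilde f}=\lambda$, and $\gamma>L_{\tilde f}$. Fix a team $i$ and $x^t\in\mathbb{R}^d$; let $w_i^{t,0}=x^t$ and $w_i^{t,k+1}=(1-\eta_i(\lambda+\gamma))w_i^{t,k}+\eta_i\gamma x^t+\eta_i\lambda\frac1{N_i}\sum_{j=1}^{N_i}\theta_{i,j}^{t,k,L}$ for $k=0,\dots,K-1$, where $\|\mathrm{prox}_{f_{i,j}/\lambda}(w_i^{t,k})-\theta_{i,j}^{t,k,L}\|^2\le\delta_{i,j}$ for all $k,j$. Let $p_i(y)=F_i(y)+\frac\gamma2\|y-x^t\|^2$ and let $w_i^{t,k^*}$ be an iterate $w_i^{t,k}$, $k\in\{0,\dots,K-1\}$, minimizing $\|\nabla p_i(w_i^{t,k})\|^2$. If $\eta_i\le\frac1{L_{\tilde f}+\gamma}$, then $$\|w_i^{t,k^*}-\mathrm{prox}_{F_i/\gamma}(x^t)\|^2\le\frac{1}{(\gamma-L_{\tilde f})^2}\Big(\frac{2}{K\eta_i}\big(F_i(x^t)-\tilde F_i(x^t)\big)+\lambda^2\frac1{N_i}\sum_{j=1}^{N_i}\delta_{i,j}\Big).$$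
   Context: Given $\lambda,\gamma>0$ and differentiable $f_{i,j}$: $\tilde f_{i,j}(w)=\min_\theta\{f_{i,j}(\theta)+\frac\lambda2\|\theta-w\|^2\}$ with minimizer $\mathrm{prox}_{f_{i,j}/\lambda}(w)$; $F_i(w)=\frac1{N_i}\sum_j\tilde f_{i,j}(w)$; $\tilde F_i(x)=\min_w\{F_i(w)+\frac\gamma2\|w-x\|^2\}$ with minimizer $\mathrm{prox}_{F_i/\gamma}(x)$. (The paper writes the first term as $F_i(x^t)-\mathrm{prox}_{F_i/\gamma}(x^t)$; the quantity meant is $p_i(x^t)-p_i(\mathrm{prox}_{F_i/\gamma}(x^t))=F_i(x^t)-\tilde F_i(x^t)$.) *)

theory Defs
  imports "HOL-Analysis.Analysis"
begin

definition grad :: "('a::euclidean_space \<Rightarrow> real) \<Rightarrow> 'a \<Rightarrow> 'a" where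
  "grad f x = (SOME g. GDERIV f x :> g)"

definition smooth :: "real \<Rightarrow> ('a::euclidean_space \<Rightarrow> real) \<Rightarrow> bool" where
  "smooth L f \<longleftrightarrow> (\<forall>x. f differentiable (at x)) \<and>
     (\<forall>x y. norm (grad f x - grad f y) \<le> L * norm (x - y))"

definition moreau :: "('a::euclidean_space \<Rightarrow> real) \<Rightarrow> real \<Rightarrow> 'a \<Rightarrow> real" where
  "moreau f lam w = Inf (range (\<lambda>\<theta>. f \<theta> + lam / 2 * (norm (\<theta> - w))\<^sup>2))"

definition prox :: "('a::euclidean_space \<Rightarrow> real) \<Rightarrow> real \<Rightarrow> 'a \<Rightarrow> 'a" where
  "prox f lam w = (SOME \<theta>. \<forall>\<theta>'. f \<theta> + lam / 2 * (norm (\<theta> - w))\<^sup>2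
                                  \<le> f \<theta>' + lam / 2 * (norm (\<theta>' - w))\<^sup>2)"

end

theory Submission
  imports Defs
begin

text \<open>For \<open>\<lambda> > 2L\<^sub>f\<close> the Moreau envelope of an \<open>L\<^sub>f\<close>-smooth function lies between two quadratic
models with curvatures \<open>-2L\<^sub>f\<close> and \<open>\<lambda>\<close>, both touching it with slope \<open>\<lambda>(w - prox w)\<close>. Averaging and
adding \<open>\<gamma>/2 \<parallel>y - x\<parallel>\<^sup>2\<close> squeezes \<open>p\<close> between curvatures \<open>\<gamma> - 2L\<^sub>f > 0\<close> and \<open>\<lambda> + \<gamma>\<close>, and the
inner loop is gradient descent on \<open>p\<close> with step \<open>\<eta> \<le> 1/(\<lambda> + \<gamma>)\<close> and gradient error
\<open>\<lambda>(avg prox - avg \<theta>)\<close>. The descent lemma, summed over the \<open>K\<close> steps, bounds the smallest squared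
gradient by \<open>2/(K\<eta>)\<close> times the decrease of \<open>p\<close>, which is at most \<open>F(x) - F\<^sup>~(x)\<close>, plus the error. Finally,
since the averaged prox map is 2-Lipschitz, \<open>\<nabla>p v = (\<lambda> + \<gamma>) v - \<gamma> x - \<lambda> avg prox v\<close> grows at
least like \<open>(\<gamma> - \<lambda>) \<parallel>v - prox\<^bsub>F/\<gamma>\<^esub>(x)\<parallel>\<close> away from its zero, which is the proximal point.\<close>

lemma has_gderiv_grad:
  fixes f :: "'a::euclidean_space \<Rightarrow> real"
  assumes "f differentiable (at x)"
  shows "GDERIV f x :> grad f x"
proof -
  obtain D where D: "(f has_derivative D) (at x)"
    using assms unfolding differentiable_def by blast
  have lin: "linear D" using D has_derivative_linear by blast
  define g where "g = (\<Sum>b\<in>Basis. D b *\<^sub>R b)"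
  have "D h = inner h g" for h
  proof -
    have "D h = D (\<Sum>b\<in>Basis. inner h b *\<^sub>R b)" by (simp add: euclidean_representation)
    also have "\<dots> = (\<Sum>b\<in>Basis. inner h b * D b)"
      by (simp add: linear_sum[OF lin] linear_scale[OF lin])
    also have "\<dots> = inner h g" unfolding g_def by (simp add: inner_sum_right mult.commute)
    finally show ?thesis .
  qed
  then have "D = (\<lambda>h. inner h g)" by auto
  then have "GDERIV f x :> g" using D by (simp add: gderiv_def)
  then show ?thesis unfolding grad_def by (rule someI)
qed

lemma grad_eqI:
  fixes f :: "'a::euclidean_space \<Rightarrow> real"
  assumes "GDERIV f x :> g"
  shows "grad f x = g"
proof -
  have "GDERIV f x :> grad f x" unfolding grad_def using assms by (rule someI)
  then have "(\<lambda>h. inner h (grad f x)) = (\<lambda>h. inner h g)"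
    using has_derivative_unique assms unfolding gderiv_def by blast
  then have "inner (grad f x - g) (grad f x) = inner (grad f x - g) g" by metis
  then have "inner (grad f x - g) (grad f x - g) = 0" by (simp add: inner_diff_right)
  then show ?thesis by simp
qed

lemma gderiv_quadratic_remainderI:
  fixes F :: "'a::real_inner \<Rightarrow> real"
  assumes "\<And>y. \<bar>F y - F v - inner g (y - v)\<bar> \<le> C * (norm (y - v))\<^sup>2"
  shows "GDERIV F v :> g"
  unfolding gderiv_def has_derivative_at_alt
proof (intro conjI allI impI)
  show "bounded_linear (\<lambda>h. inner h g)" by (rule bounded_linear_inner_left)
  fix e :: real assume e: "e > 0"
  define C' where "C' = \<bar>C\<bar> + 1"
  have C': "C' > 0" "C \<le> C'" unfolding C'_def by auto
  show "\<exists>d>0. \<forall>y. norm (y - v) < d \<longrightarrow> norm (F y - F v - inner (y - v) g) \<le> e * norm (y - v)"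
  proof (intro exI[of _ "e / C'"] conjI allI impI)
    show "e / C' > 0" using e C' by simp
    fix y assume y: "norm (y - v) < e / C'"
    have "norm (F y - F v - inner (y - v) g) \<le> C * (norm (y - v))\<^sup>2"
      using assms[of y] by (simp add: inner_commute)
    also have "\<dots> \<le> C' * (norm (y - v) * norm (y - v))"
      using C' by (simp add: power2_eq_square mult_right_mono)
    also have "\<dots> \<le> C' * ((e / C') * norm (y - v))"
      using C' y by (intro mult_left_mono mult_right_mono) auto
    also have "\<dots> = e * norm (y - v)" using C' by simp
    finally show "norm (F y - F v - inner (y - v) g) \<le> e * norm (y - v)" .
  qed
qed

lemma norm_add_sq:
  fixes a b :: "'a::real_inner"
  shows "(norm (a + b))\<^sup>2 = (norm a)\<^sup>2 + 2 * inner a b + (norm b)\<^sup>2"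
  by (simp add: power2_norm_eq_inner inner_add_left inner_add_right inner_commute)

text \<open>The lower curvature \<open>m\<close> may be negative: Moreau envelopes of nonconvex functions are only
weakly convex.\<close>

definition curvature_bounds :: "real \<Rightarrow> real \<Rightarrow> ('a::real_inner \<Rightarrow> 'a) \<Rightarrow> ('a \<Rightarrow> real) \<Rightarrow> bool" where
  "curvature_bounds m M g F \<longleftrightarrow> (\<forall>y v.
     F v + inner (g v) (y - v) + m / 2 * (norm (y - v))\<^sup>2 \<le> F y \<and>
     F y \<le> F v + inner (g v) (y - v) + M / 2 * (norm (y - v))\<^sup>2)"

lemma curvature_boundsD:
  assumes "curvature_bounds m M g F"
  shows curvature_bounds_lower: "F v + inner (g v) (y - v) + m / 2 * (norm (y - v))\<^sup>2 \<le> F y"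
    and curvature_bounds_upper: "F y \<le> F v + inner (g v) (y - v) + M / 2 * (norm (y - v))\<^sup>2"
  using assms unfolding curvature_bounds_def by blast+

lemma curvature_bounds_grad:
  fixes F :: "'a::euclidean_space \<Rightarrow> real"
  assumes "curvature_bounds m M g F"
  shows "grad F v = g v"
proof (intro grad_eqI gderiv_quadratic_remainderI[where C = "\<bar>m\<bar> + \<bar>M\<bar>"])
  fix y
  have "- (\<bar>m\<bar> + \<bar>M\<bar>) * (norm (y - v))\<^sup>2 \<le> m / 2 * (norm (y - v))\<^sup>2"
    by (rule mult_right_mono) (arith, simp)
  moreover have "M / 2 * (norm (y - v))\<^sup>2 \<le> (\<bar>m\<bar> + \<bar>M\<bar>) * (norm (y - v))\<^sup>2"
    by (rule mult_right_mono) (arith, simp)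
  ultimately show "\<bar>F y - F v - inner (g v) (y - v)\<bar> \<le> (\<bar>m\<bar> + \<bar>M\<bar>) * (norm (y - v))\<^sup>2"
    using curvature_bounds_lower[OF assms, where v=v and y=y]
      curvature_bounds_upper[OF assms, where v=v and y=y] by linarith
qed

lemma curvature_bounds_add_sq_dist:
  assumes "curvature_bounds m M g F"
  shows "curvature_bounds (m + c) (M + c) (\<lambda>v. g v + c *\<^sub>R (v - x))
           (\<lambda>y. F y + c / 2 * (norm (y - x))\<^sup>2)"
proof -
  have expand: "c / 2 * (norm (y - x))\<^sup>2
        = c / 2 * (norm (v - x))\<^sup>2 + inner (c *\<^sub>R (v - x)) (y - v) + c / 2 * (norm (y - v))\<^sup>2"
    for y v :: 'a
  proof -
    have "(norm (y - x))\<^sup>2 = (norm (v - x))\<^sup>2 + 2 * inner (v - x) (y - v) + (norm (y - v))\<^sup>2"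
      using norm_add_sq[of "v - x" "y - v"] by simp
    then show ?thesis by (simp only:) (simp add: field_simps inner_diff_left)
  qed
  show ?thesis unfolding curvature_bounds_def
  proof (intro allI conjI)
    fix y v
    have inner_split: "inner (g v + c *\<^sub>R (v - x)) (y - v)
        = inner (g v) (y - v) + inner (c *\<^sub>R (v - x)) (y - v)"
      by (rule inner_add_left)
    have "(m + c) / 2 * (norm (y - v))\<^sup>2 = m / 2 * (norm (y - v))\<^sup>2 + c / 2 * (norm (y - v))\<^sup>2"
      by (simp add: field_simps)
    then show "F v + c / 2 * (norm (v - x))\<^sup>2 + inner (g v + c *\<^sub>R (v - x)) (y - v)
          + (m + c) / 2 * (norm (y - v))\<^sup>2 \<le> F y + c / 2 * (norm (y - x))\<^sup>2"
      using curvature_bounds_lower[OF assms, where v=v and y=y] expand[of y v] inner_split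
      by linarith
    have "(M + c) / 2 * (norm (y - v))\<^sup>2 = M / 2 * (norm (y - v))\<^sup>2 + c / 2 * (norm (y - v))\<^sup>2"
      by (simp add: field_simps)
    then show "F y + c / 2 * (norm (y - x))\<^sup>2 \<le> F v + c / 2 * (norm (v - x))\<^sup>2
          + inner (g v + c *\<^sub>R (v - x)) (y - v) + (M + c) / 2 * (norm (y - v))\<^sup>2"
      using curvature_bounds_upper[OF assms, where v=v and y=y] expand[of y v] inner_split
      by linarith
  qed
qed

lemma smooth_nonneg:
  fixes f :: "'a::euclidean_space \<Rightarrow> real"
  assumes "smooth L f"
  shows "0 \<le> L"
proof (rule ccontr)
  assume neg: "\<not> 0 \<le> L"
  obtain b :: 'a where "b \<in> Basis" using nonempty_Basis by blast
  then have "norm b > 0" using nonzero_Basis by auto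
  moreover have "norm (grad f b - grad f 0) \<le> L * norm (b - 0)"
    using assms unfolding smooth_def by blast
  ultimately show False using neg by (smt (verit) mult_neg_pos norm_ge_zero diff_zero)
qed

lemma smooth_lower_bound:
  fixes f :: "'a::euclidean_space \<Rightarrow> real"
  assumes "smooth L f"
  shows "f x + inner (grad f x) (y - x) - L / 2 * (norm (y - x))\<^sup>2 \<le> f y"
proof -
  define v where "v = y - x"
  have diff: "\<And>z. f differentiable (at z)"
    and lip: "\<And>a b. norm (grad f a - grad f b) \<le> L * norm (a - b)"
    using assms unfolding smooth_def by auto
  text \<open>\<open>\<psi>\<close> is nondecreasing on \<open>[0, 1]\<close> because the Lipschitz gradient controls its derivative.\<close>
  define \<psi> where "\<psi> t = f (x + t *\<^sub>R v) - t * inner (grad f x) v + L / 2 * t\<^sup>2 * (norm v)\<^sup>2" for t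
  have \<psi>_deriv: "(\<psi> has_real_derivative
      (inner (grad f (x + t *\<^sub>R v)) v - inner (grad f x) v + L * t * (norm v)\<^sup>2)) (at t)" for t
  proof -
    have g: "(f has_derivative (\<lambda>h. inner h (grad f (x + t *\<^sub>R v)))) (at (x + t *\<^sub>R v))"
      using has_gderiv_grad[OF diff] unfolding gderiv_def by blast
    have l: "((\<lambda>s. x + s *\<^sub>R v) has_derivative (\<lambda>s. s *\<^sub>R v)) (at t)"
      by (auto intro!: derivative_eq_intros)
    have "((\<lambda>s. f (x + s *\<^sub>R v)) has_derivative (\<lambda>s. inner (s *\<^sub>R v) (grad f (x + t *\<^sub>R v)))) (at t)"
      using has_derivative_compose[OF l g] by (simp add: o_def)
    then have "((\<lambda>s. f (x + s *\<^sub>R v)) has_real_derivative (inner (grad f (x + t *\<^sub>R v)) v)) (at t)"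
      unfolding has_field_derivative_def
      by (rule has_derivative_eq_rhs) (simp add: fun_eq_iff inner_commute mult.commute)
    then show ?thesis unfolding \<psi>_def
      by (auto intro!: derivative_eq_intros simp: power2_eq_square)
  qed
  have "\<psi> 0 \<le> \<psi> 1"
  proof (rule DERIV_nonneg_imp_nondecreasing[of 0 1])
    fix t :: real assume t: "0 \<le> t" "t \<le> 1"
    have "\<bar>inner (grad f (x + t *\<^sub>R v) - grad f x) v\<bar> \<le> norm (grad f (x + t *\<^sub>R v) - grad f x) * norm v"
      by (rule Cauchy_Schwarz_ineq2)
    also have "\<dots> \<le> (L * norm (t *\<^sub>R v)) * norm v"
      using lip[of "x + t *\<^sub>R v" x] by (intro mult_right_mono) auto
    also have "\<dots> = L * t * (norm v)\<^sup>2" using t by (simp add: power2_eq_square)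
    finally have "inner (grad f (x + t *\<^sub>R v)) v - inner (grad f x) v + L * t * (norm v)\<^sup>2 \<ge> 0"
      by (simp add: inner_diff_left)
    then show "\<exists>y. DERIV \<psi> t :> y \<and> 0 \<le> y" using \<psi>_deriv by blast
  qed simp
  then show ?thesis unfolding \<psi>_def v_def by simp
qed

lemma lipschitz_scaled_fixed_point:
  fixes B :: "'a::banach \<Rightarrow> 'a"
  assumes lip: "\<And>u v. norm (B u - B v) \<le> L * norm (u - v)" and "0 \<le> L" "L < a"
  obtains y where "a *\<^sub>R y = B y"
proof -
  have a: "0 < a" using assms by linarith
  have "\<exists>!y. (1 / a) *\<^sub>R B y = y"
  proof (rule banach_fix_type[of "L / a"])
    show "0 \<le> L / a" "L / a < 1" using assms a by auto
    show "\<forall>u v. dist ((1 / a) *\<^sub>R B u) ((1 / a) *\<^sub>R B v) \<le> L / a * dist u v"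
    proof (intro allI)
      fix u v
      have "dist ((1 / a) *\<^sub>R B u) ((1 / a) *\<^sub>R B v) = norm (B u - B v) / a"
        using a by (simp add: dist_norm flip: scaleR_diff_right)
      also have "\<dots> \<le> L * norm (u - v) / a" using lip a by (simp add: divide_right_mono)
      finally show "dist ((1 / a) *\<^sub>R B u) ((1 / a) *\<^sub>R B v) \<le> L / a * dist u v"
        by (simp add: dist_norm)
    qed
  qed
  then obtain y where y: "(1 / a) *\<^sub>R B y = y" by blast
  have "a *\<^sub>R y = a *\<^sub>R ((1 / a) *\<^sub>R B y)" using y by simp
  also have "\<dots> = B y" using a by simp
  finally show ?thesis by (rule that)
qed

lemma lipschitz_perturbation_sq_norm_ge:
  fixes B :: "'a::real_normed_vector \<Rightarrow> 'a"
  assumes lip: "\<And>u v. norm (B u - B v) \<le> L * norm (u - v)"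
    and "0 \<le> L" and "L \<le> a" and "a *\<^sub>R y = B y"
  shows "(a - L)\<^sup>2 * (norm (v - y))\<^sup>2 \<le> (norm (a *\<^sub>R v - B v))\<^sup>2"
proof -
  have "a *\<^sub>R v - B v = a *\<^sub>R (v - y) - (B v - B y)"
    using assms(4) by (simp add: algebra_simps)
  then have "norm (a *\<^sub>R (v - y)) - norm (B v - B y) \<le> norm (a *\<^sub>R v - B v)"
    by (metis norm_triangle_ineq2)
  moreover have "norm (a *\<^sub>R (v - y)) = a * norm (v - y)" using \<open>0 \<le> L\<close> \<open>L \<le> a\<close> by simp
  ultimately have "(a - L) * norm (v - y) \<le> norm (a *\<^sub>R v - B v)"
    using lip[of v y] by (simp add: algebra_simps)
  then show ?thesis
    using \<open>L \<le> a\<close> by (metis power_mono power_mult_distrib mult_nonneg_nonneg norm_ge_zero diff_ge_0_iff_ge)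
qed

lemma prox_moreau_eqI:
  fixes f :: "'a::euclidean_space \<Rightarrow> real"
  assumes "0 < c"
    and growth: "\<And>\<theta>. f t + lam / 2 * (norm (t - w))\<^sup>2 + c * (norm (\<theta> - t))\<^sup>2
                        \<le> f \<theta> + lam / 2 * (norm (\<theta> - w))\<^sup>2"
  shows "prox f lam w = t" and "moreau f lam w = f t + lam / 2 * (norm (t - w))\<^sup>2"
proof -
  have min: "f t + lam / 2 * (norm (t - w))\<^sup>2 \<le> f \<theta> + lam / 2 * (norm (\<theta> - w))\<^sup>2" for \<theta>
    using growth[of \<theta>] \<open>0 < c\<close> by (smt (verit) mult_pos_pos zero_le_power2 mult_nonneg_nonneg)
  show "prox f lam w = t"
    unfolding prox_def
  proof (rule some_equality)
    fix t' assume "\<forall>\<theta>. f t' + lam / 2 * (norm (t' - w))\<^sup>2 \<le> f \<theta> + lam / 2 * (norm (\<theta> - w))\<^sup>2"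
    then have "f t' + lam / 2 * (norm (t' - w))\<^sup>2 \<le> f t + lam / 2 * (norm (t - w))\<^sup>2" by blast
    then have "c * (norm (t' - t))\<^sup>2 \<le> 0" using growth[of t'] by linarith
    then show "t' = t" using \<open>0 < c\<close> by (simp add: mult_le_0_iff)
  qed (use min in blast)
  show "moreau f lam w = f t + lam / 2 * (norm (t - w))\<^sup>2"
    unfolding moreau_def by (rule cInf_eq_minimum) (use min in auto)
qed

lemma prox_smooth:
  fixes f :: "'a::euclidean_space \<Rightarrow> real"
  assumes sm: "smooth L f" and "L < lam"
  shows "grad f (prox f lam w) = lam *\<^sub>R (w - prox f lam w)"
    and "moreau f lam w = f (prox f lam w) + lam / 2 * (norm (prox f lam w - w))\<^sup>2"
    and "moreau f lam w \<le> f \<theta> + lam / 2 * (norm (\<theta> - w))\<^sup>2"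
proof -
  have lip: "\<And>a b. norm (grad f a - grad f b) \<le> L * norm (a - b)"
    using sm unfolding smooth_def by auto
  \<comment> \<open>the proximal point is the fixed point of the contraction \<open>t \<mapsto> w - \<nabla>f(t)/\<lambda>\<close>\<close>
  obtain t where "lam *\<^sub>R t = lam *\<^sub>R w - grad f t"
  proof (rule lipschitz_scaled_fixed_point[of "\<lambda>t. lam *\<^sub>R w - grad f t" L lam])
    show "norm ((lam *\<^sub>R w - grad f u) - (lam *\<^sub>R w - grad f v)) \<le> L * norm (u - v)" for u v
      using lip[of v u] by (simp add: norm_minus_commute)
  qed (use smooth_nonneg[OF sm] \<open>L < lam\<close> in auto)
  then have grad_t: "grad f t = lam *\<^sub>R (w - t)" by (simp add: algebra_simps)
  have growth: "f t + lam / 2 * (norm (t - w))\<^sup>2 + (lam - L) / 2 * (norm (\<theta> - t))\<^sup>2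
                \<le> f \<theta> + lam / 2 * (norm (\<theta> - w))\<^sup>2" for \<theta>
  proof -
    have "f t + inner (grad f t) (\<theta> - t) - L / 2 * (norm (\<theta> - t))\<^sup>2 \<le> f \<theta>"
      by (rule smooth_lower_bound[OF sm])
    moreover have "inner (grad f t) (\<theta> - t) = - lam * inner (\<theta> - t) (t - w)"
      unfolding grad_t by (simp add: inner_commute inner_diff_left inner_diff_right algebra_simps)
    moreover have "(norm (\<theta> - w))\<^sup>2 = (norm (\<theta> - t))\<^sup>2 + 2 * inner (\<theta> - t) (t - w) + (norm (t - w))\<^sup>2"
      using norm_add_sq[of "\<theta> - t" "t - w"] by simp
    then have "lam / 2 * (norm (\<theta> - w))\<^sup>2 = lam / 2 * (norm (\<theta> - t))\<^sup>2
        + lam * inner (\<theta> - t) (t - w) + lam / 2 * (norm (t - w))\<^sup>2"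
      by (simp only:) (simp add: algebra_simps)
    moreover have "(lam - L) / 2 * (norm (\<theta> - t))\<^sup>2 = lam / 2 * (norm (\<theta> - t))\<^sup>2 - L / 2 * (norm (\<theta> - t))\<^sup>2"
      by (simp add: diff_divide_distrib left_diff_distrib)
    ultimately show ?thesis by linarith
  qed
  have "prox f lam w = t" and moreau_w: "moreau f lam w = f t + lam / 2 * (norm (t - w))\<^sup>2"
    using prox_moreau_eqI[where c = "(lam - L) / 2", OF _ growth] \<open>L < lam\<close> by auto
  then show "grad f (prox f lam w) = lam *\<^sub>R (w - prox f lam w)"
    and "moreau f lam w = f (prox f lam w) + lam / 2 * (norm (prox f lam w - w))\<^sup>2"
    using grad_t by simp_all
  have "(lam - L) / 2 * (norm (\<theta> - t))\<^sup>2 \<ge> 0" using \<open>L < lam\<close> by simp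
  then show "moreau f lam w \<le> f \<theta> + lam / 2 * (norm (\<theta> - w))\<^sup>2"
    using growth[of \<theta>] moreau_w by linarith
qed

lemma moreau_upper_bound:
  fixes f :: "'a::euclidean_space \<Rightarrow> real"
  assumes "smooth L f" and "L < lam"
  shows "moreau f lam y \<le> moreau f lam w + inner (lam *\<^sub>R (w - prox f lam w)) (y - w)
           + lam / 2 * (norm (y - w))\<^sup>2"
proof -
  define a where "a = prox f lam w"
  have "(norm (a - y))\<^sup>2 = (norm (a - w))\<^sup>2 + 2 * inner (a - w) (w - y) + (norm (w - y))\<^sup>2"
    using norm_add_sq[of "a - w" "w - y"] by simp
  then have "lam / 2 * (norm (a - y))\<^sup>2
      = lam / 2 * (norm (a - w))\<^sup>2 + lam * inner (a - w) (w - y) + lam / 2 * (norm (y - w))\<^sup>2"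
    by (simp only: norm_minus_commute[of w y]) (simp add: algebra_simps)
  moreover have "inner (lam *\<^sub>R (w - a)) (y - w) = lam * inner (a - w) (w - y)"
    by (simp add: inner_diff_left inner_diff_right algebra_simps)
  ultimately show ?thesis
    using prox_smooth(2)[OF assms, of w] prox_smooth(3)[OF assms, of y a]
    unfolding a_def[symmetric] by linarith
qed

lemma moreau_lower_bound:
  fixes f :: "'a::euclidean_space \<Rightarrow> real"
  assumes sm: "smooth L f" and "2 * L < lam"
  shows "moreau f lam w + inner (lam *\<^sub>R (w - prox f lam w)) (y - w) - L * (norm (y - w))\<^sup>2
           \<le> moreau f lam y"
proof -
  have L0: "0 \<le> L" by (rule smooth_nonneg[OF sm])
  then have "L < lam" using assms by linarith
  define a where "a = prox f lam w"
  define b where "b = prox f lam y"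
  define u where "u = a - w"
  define d where "d = y - w"
  define e where "e = (b - y) - u"
  have moreau_y: "moreau f lam y = f b + lam / 2 * (norm (b - y))\<^sup>2"
    using prox_smooth(2)[OF sm \<open>L < lam\<close>, of y] unfolding b_def by simp
  have moreau_w: "moreau f lam w = f a + lam / 2 * (norm u)\<^sup>2"
    using prox_smooth(2)[OF sm \<open>L < lam\<close>, of w] unfolding a_def u_def by simp
  have grad_a: "grad f a = - lam *\<^sub>R u"
    using prox_smooth(1)[OF sm \<open>L < lam\<close>, of w] unfolding a_def u_def by (simp add: scaleR_diff_right)
  have "b - a = d + e" unfolding e_def u_def d_def by simp
  then have f_b: "f a - lam * inner u d - lam * inner u e - L / 2 * (norm (d + e))\<^sup>2 \<le> f b"
    using smooth_lower_bound[OF sm, of a b] unfolding grad_a by (simp add: inner_add_right)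
  have "(norm (d - e))\<^sup>2 = (norm d)\<^sup>2 - 2 * inner d e + (norm e)\<^sup>2"
    using norm_add_sq[of d "- e"] by simp
  then have "(norm (d + e))\<^sup>2 \<le> 2 * (norm d)\<^sup>2 + 2 * (norm e)\<^sup>2"
    using norm_add_sq[of d e] zero_le_power2[of "norm (d - e)"] by linarith
  then have "L / 2 * (norm (d + e))\<^sup>2 \<le> L / 2 * (2 * (norm d)\<^sup>2 + 2 * (norm e)\<^sup>2)"
    using L0 by (intro mult_left_mono) auto
  also have "\<dots> = L * (norm d)\<^sup>2 + L * (norm e)\<^sup>2" by (simp add: algebra_simps)
  finally have cross: "L / 2 * (norm (d + e))\<^sup>2 \<le> L * (norm d)\<^sup>2 + L * (norm e)\<^sup>2" .
  have "b - y = u + e" unfolding e_def by simp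
  then have "lam / 2 * (norm (b - y))\<^sup>2 = lam / 2 * (norm u)\<^sup>2 + lam * inner u e + lam / 2 * (norm e)\<^sup>2"
    using norm_add_sq[of u e] by (simp add: algebra_simps)
  moreover have "L * (norm e)\<^sup>2 \<le> lam / 2 * (norm e)\<^sup>2"
    using \<open>2 * L < lam\<close> by (intro mult_right_mono) auto
  moreover have "inner (lam *\<^sub>R (w - a)) d = - (lam * inner u d)"
    unfolding u_def by (simp add: inner_diff_left algebra_simps)
  ultimately show ?thesis
    unfolding a_def[symmetric] d_def[symmetric] moreau_y moreau_w using f_b cross by linarith
qed

lemma prox_lipschitz:
  fixes f :: "'a::euclidean_space \<Rightarrow> real"
  assumes sm: "smooth L f" and "2 * L < lam"
  shows "norm (prox f lam y - prox f lam w) \<le> 2 * norm (y - w)"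
proof -
  have L0: "0 \<le> L" by (rule smooth_nonneg[OF sm])
  then have "L < lam" "0 < lam" using assms by linarith+
  define a where "a = prox f lam w"
  define b where "b = prox f lam y"
  have grad_a: "grad f a = lam *\<^sub>R (w - a)" and grad_b: "grad f b = lam *\<^sub>R (y - b)"
    using prox_smooth(1)[OF sm \<open>L < lam\<close>] unfolding a_def b_def by blast+
  have half: "L / lam * norm (b - a) \<le> 1 / 2 * norm (b - a)"
    using \<open>2 * L < lam\<close> \<open>0 < lam\<close> by (intro mult_right_mono) (simp_all add: divide_simps)
  have "b - a = (y - w) - (1 / lam) *\<^sub>R (grad f b - grad f a)"
    unfolding grad_a grad_b using \<open>0 < lam\<close> by (simp add: algebra_simps)
  then have "norm (b - a) \<le> norm (y - w) + (1 / lam) * norm (grad f b - grad f a)"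
    using norm_triangle_ineq4[of "y - w" "(1 / lam) *\<^sub>R (grad f b - grad f a)"] \<open>0 < lam\<close> by simp
  also have "\<dots> \<le> norm (y - w) + (1 / lam) * (L * norm (b - a))"
    using sm \<open>0 < lam\<close> unfolding smooth_def by (intro add_left_mono mult_left_mono) auto
  also have "\<dots> \<le> norm (y - w) + 1 / 2 * norm (b - a)"
    using half by simp
  finally show ?thesis unfolding a_def[symmetric] b_def[symmetric] by linarith
qed

lemma curvature_bounds_moreau:
  fixes f :: "'a::euclidean_space \<Rightarrow> real"
  assumes "smooth L f" and "2 * L < lam"
  shows "curvature_bounds (- 2 * L) lam (\<lambda>w. lam *\<^sub>R (w - prox f lam w)) (moreau f lam)"
proof -
  have "L < lam" using smooth_nonneg[OF assms(1)] assms(2) by linarith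
  then show ?thesis
    unfolding curvature_bounds_def
    using moreau_lower_bound[OF assms] moreau_upper_bound[OF assms(1)] by simp
qed

lemma norm_average_le:
  fixes q :: "nat \<Rightarrow> 'a::real_normed_vector"
  assumes "0 < N" and "\<And>j. j < N \<Longrightarrow> norm (q j) \<le> B"
  shows "norm ((1 / real N) *\<^sub>R (\<Sum>j<N. q j)) \<le> B"
proof -
  have "norm ((1 / real N) *\<^sub>R (\<Sum>j<N. q j)) \<le> (1 / real N) * (\<Sum>j<N. norm (q j))"
    by (simp add: norm_sum divide_right_mono)
  also have "\<dots> \<le> (1 / real N) * (\<Sum>j<N. B)" using assms(2) by (intro mult_left_mono sum_mono) auto
  also have "\<dots> = B" using \<open>0 < N\<close> by simp
  finally show ?thesis .
qed

lemma norm_average_sq_le: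
  fixes q :: "nat \<Rightarrow> 'a::real_normed_vector"
  assumes "0 < N" and "\<And>j. j < N \<Longrightarrow> (norm (q j))\<^sup>2 \<le> \<delta> j"
  shows "(norm ((1 / real N) *\<^sub>R (\<Sum>j<N. q j)))\<^sup>2 \<le> (1 / real N) * (\<Sum>j<N. \<delta> j)"
proof -
  have "norm ((1 / real N) *\<^sub>R (\<Sum>j<N. q j)) \<le> (1 / real N) * (\<Sum>j<N. norm (q j))"
    by (simp add: norm_sum divide_right_mono)
  then have "(norm ((1 / real N) *\<^sub>R (\<Sum>j<N. q j)))\<^sup>2 \<le> ((1 / real N) * (\<Sum>j<N. norm (q j)))\<^sup>2"
    by (intro power_mono) auto
  also have "\<dots> = (\<Sum>j<N. norm (q j))\<^sup>2 / (real N)\<^sup>2" by (simp add: power_divide)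
  also have "\<dots> \<le> ((\<Sum>j<N. (norm (q j))\<^sup>2) * real N) / (real N)\<^sup>2"
    using sum_squared_le_sum_of_squares[of "\<lambda>j. norm (q j)" "{..<N}"] by (intro divide_right_mono) auto
  also have "\<dots> = (1 / real N) * (\<Sum>j<N. (norm (q j))\<^sup>2)" using \<open>0 < N\<close> by (simp add: power2_eq_square)
  also have "\<dots> \<le> (1 / real N) * (\<Sum>j<N. \<delta> j)" using assms(2) by (intro mult_left_mono sum_mono) auto
  finally show ?thesis .
qed

lemma curvature_bounds_average:
  assumes "0 < N" and curv: "\<And>j. j < N \<Longrightarrow> curvature_bounds m M (g j) (F j)"
  shows "curvature_bounds m M (\<lambda>v. (1 / real N) *\<^sub>R (\<Sum>j<N. g j v)) (\<lambda>v. (1 / real N) * (\<Sum>j<N. F j v))"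
  unfolding curvature_bounds_def
proof (intro allI conjI)
  fix y v
  have average: "(1 / real N) * (\<Sum>j<N. F j v + inner (g j v) (y - v) + c / 2 * (norm (y - v))\<^sup>2)
      = (1 / real N) * (\<Sum>j<N. F j v) + inner ((1 / real N) *\<^sub>R (\<Sum>j<N. g j v)) (y - v)
        + c / 2 * (norm (y - v))\<^sup>2" for c
    using \<open>0 < N\<close> by (simp add: sum.distrib inner_sum_left distrib_left)
  have "(\<Sum>j<N. F j v + inner (g j v) (y - v) + m / 2 * (norm (y - v))\<^sup>2) \<le> (\<Sum>j<N. F j y)"
    using curvature_bounds_lower[OF curv] by (intro sum_mono) auto
  then show "(1 / real N) * (\<Sum>j<N. F j v) + inner ((1 / real N) *\<^sub>R (\<Sum>j<N. g j v)) (y - v)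
      + m / 2 * (norm (y - v))\<^sup>2 \<le> (1 / real N) * (\<Sum>j<N. F j y)"
    unfolding average[symmetric] by (intro mult_left_mono) auto
  have "(\<Sum>j<N. F j y) \<le> (\<Sum>j<N. F j v + inner (g j v) (y - v) + M / 2 * (norm (y - v))\<^sup>2)"
    using curvature_bounds_upper[OF curv] by (intro sum_mono) auto
  then show "(1 / real N) * (\<Sum>j<N. F j y) \<le> (1 / real N) * (\<Sum>j<N. F j v)
      + inner ((1 / real N) *\<^sub>R (\<Sum>j<N. g j v)) (y - v) + M / 2 * (norm (y - v))\<^sup>2"
    unfolding average[symmetric] by (intro mult_left_mono) auto
qed

lemma inexact_gradient_step:
  fixes p :: "'a::real_inner \<Rightarrow> real"
  assumes upper: "p v' \<le> p v + inner g (v' - v) + M / 2 * (norm (v' - v))\<^sup>2"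
    and step: "v' = v - eta *\<^sub>R (g + e)" and "0 < eta" and "eta \<le> 1 / M"
  shows "(norm g)\<^sup>2 \<le> 2 / eta * (p v - p v') + (norm e)\<^sup>2"
proof -
  have "0 < M" using assms(3,4) zero_less_divide_1_iff by fastforce
  then have "M * eta \<le> 1" using \<open>eta \<le> 1 / M\<close> by (simp add: field_simps)
  then have "M / 2 * eta\<^sup>2 \<le> eta / 2"
    using mult_left_mono[of "M * eta" 1 eta] \<open>0 < eta\<close> by (simp add: power2_eq_square algebra_simps)
  moreover have "(norm (v' - v))\<^sup>2 = eta\<^sup>2 * (norm (g + e))\<^sup>2"
    unfolding step by (simp add: power_mult_distrib)
  ultimately have "M / 2 * (norm (v' - v))\<^sup>2 \<le> eta / 2 * (norm (g + e))\<^sup>2"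
    by (simp add: mult_right_mono flip: mult.assoc)
  moreover have "inner g (v' - v) = - (eta * (norm g)\<^sup>2) - eta * inner g e"
    unfolding step by (simp add: inner_add_right power2_norm_eq_inner algebra_simps)
  moreover have "eta / 2 * (norm (g + e))\<^sup>2 = eta * (norm g)\<^sup>2 / 2 + eta * inner g e + eta * (norm e)\<^sup>2 / 2"
    unfolding norm_add_sq by (simp add: algebra_simps)
  ultimately have "eta * (norm g)\<^sup>2 \<le> 2 * (p v - p v') + eta * (norm e)\<^sup>2"
    using upper by argo
  then show ?thesis using \<open>0 < eta\<close> by (simp add: field_simps)
qed

lemma inexact_gradient_descent_min_grad:
  fixes p :: "'a::real_inner \<Rightarrow> real"
  assumes upper: "\<And>y v. p y \<le> p v + inner (g v) (y - v) + M / 2 * (norm (y - v))\<^sup>2"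
    and "0 < eta" and "eta \<le> 1 / M"
    and step: "\<And>k. k < K \<Longrightarrow> w (Suc k) = w k - eta *\<^sub>R (g (w k) + e k)"
    and err: "\<And>k. k < K \<Longrightarrow> (norm (e k))\<^sup>2 \<le> \<epsilon>"
    and "kstar < K" and kstar_min: "\<And>k. k < K \<Longrightarrow> (norm (g (w kstar)))\<^sup>2 \<le> (norm (g (w k)))\<^sup>2"
  shows "(norm (g (w kstar)))\<^sup>2 \<le> 2 / (real K * eta) * (p (w 0) - p (w K)) + \<epsilon>"
proof -
  have "real K * (norm (g (w kstar)))\<^sup>2 = (\<Sum>k<K. (norm (g (w kstar)))\<^sup>2)" by simp
  also have "\<dots> \<le> (\<Sum>k<K. 2 / eta * (p (w k) - p (w (Suc k))) + \<epsilon>)"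
  proof (intro sum_mono)
    fix k assume "k \<in> {..<K}"
    then have "k < K" by simp
    have "(norm (g (w k)))\<^sup>2 \<le> 2 / eta * (p (w k) - p (w (Suc k))) + (norm (e k))\<^sup>2"
      by (rule inexact_gradient_step[OF upper step[OF \<open>k < K\<close>] \<open>0 < eta\<close> \<open>eta \<le> 1 / M\<close>])
    then show "(norm (g (w kstar)))\<^sup>2 \<le> 2 / eta * (p (w k) - p (w (Suc k))) + \<epsilon>"
      using kstar_min[OF \<open>k < K\<close>] err[OF \<open>k < K\<close>] by linarith
  qed
  also have "\<dots> = 2 / eta * (\<Sum>k<K. p (w k) - p (w (Suc k))) + real K * \<epsilon>"
    by (simp add: sum.distrib sum_distrib_left)
  also have "(\<Sum>k<K. p (w k) - p (w (Suc k))) = p (w 0) - p (w K)"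
    by (rule sum_lessThan_telescope')
  finally show ?thesis using \<open>kstar < K\<close> \<open>0 < eta\<close> by (simp add: field_simps)
qed

lemma curvature_bounds_stationary_growth:
  assumes "curvature_bounds m M g F" and "g ys = 0"
  shows "F ys + m / 2 * (norm (y - ys))\<^sup>2 \<le> F y"
  using curvature_bounds_lower[OF assms(1), where v = ys and y = y] \<open>g ys = 0\<close> by simp

lemma prox_moreau_at_stationary_point:
  fixes F :: "'a::euclidean_space \<Rightarrow> real"
  assumes curv: "curvature_bounds m M g (\<lambda>y. F y + gam / 2 * (norm (y - x))\<^sup>2)"
    and "0 < m" and "g ys = 0"
  shows "prox F gam x = ys" and "moreau F gam x = F ys + gam / 2 * (norm (ys - x))\<^sup>2"
  using prox_moreau_eqI[where c = "m / 2", OF _ curvature_bounds_stationary_growth[OF curv \<open>g ys = 0\<close>]]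
    \<open>0 < m\<close> by auto

definition avg_prox :: "nat \<Rightarrow> (nat \<Rightarrow> 'a::euclidean_space \<Rightarrow> real) \<Rightarrow> real \<Rightarrow> 'a \<Rightarrow> 'a" where
  "avg_prox N f lam v = (1 / real N) *\<^sub>R (\<Sum>j<N. prox (f j) lam v)"

lemma avg_prox_lipschitz:
  assumes "0 < N" and "\<And>j. j < N \<Longrightarrow> smooth L (f j)" and "2 * L < lam"
  shows "norm (avg_prox N f lam u - avg_prox N f lam v) \<le> 2 * norm (u - v)"
proof -
  have "avg_prox N f lam u - avg_prox N f lam v
      = (1 / real N) *\<^sub>R (\<Sum>j<N. prox (f j) lam u - prox (f j) lam v)"
    unfolding avg_prox_def by (simp add: sum_subtractf scaleR_diff_right)
  also have "norm \<dots> \<le> 2 * norm (u - v)"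
    using assms by (intro norm_average_le prox_lipschitz) auto
  finally show ?thesis .
qed

lemma avg_prox_inexact_sq_le:
  assumes "0 < N" and "\<And>j. j < N \<Longrightarrow> (norm (prox (f j) lam v - \<theta> j))\<^sup>2 \<le> \<delta> j"
  shows "(norm (avg_prox N f lam v - (1 / real N) *\<^sub>R (\<Sum>j<N. \<theta> j)))\<^sup>2 \<le> (1 / real N) * (\<Sum>j<N. \<delta> j)"
proof -
  have "avg_prox N f lam v - (1 / real N) *\<^sub>R (\<Sum>j<N. \<theta> j)
      = (1 / real N) *\<^sub>R (\<Sum>j<N. prox (f j) lam v - \<theta> j)"
    unfolding avg_prox_def by (simp add: sum_subtractf scaleR_diff_right)
  then show ?thesis using norm_average_sq_le[OF assms] by simp
qed

lemma curvature_bounds_penalized_envelope: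
  assumes "0 < N" and "\<And>j. j < N \<Longrightarrow> smooth L (f j)" and "2 * L < lam"
  shows "curvature_bounds (gam - 2 * L) (lam + gam)
           (\<lambda>v. (lam + gam) *\<^sub>R v - (gam *\<^sub>R x + lam *\<^sub>R avg_prox N f lam v))
           (\<lambda>y. (1 / real N) * (\<Sum>j<N. moreau (f j) lam y) + gam / 2 * (norm (y - x))\<^sup>2)"
proof -
  have "curvature_bounds (- 2 * L) lam (\<lambda>v. (1 / real N) *\<^sub>R (\<Sum>j<N. lam *\<^sub>R (v - prox (f j) lam v)))
          (\<lambda>y. (1 / real N) * (\<Sum>j<N. moreau (f j) lam y))"
    using assms by (intro curvature_bounds_average curvature_bounds_moreau) auto
  from curvature_bounds_add_sq_dist[OF this, of gam x]
  have "curvature_bounds (gam - 2 * L) (lam + gam)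
          (\<lambda>v. (1 / real N) *\<^sub>R (\<Sum>j<N. lam *\<^sub>R (v - prox (f j) lam v)) + gam *\<^sub>R (v - x))
          (\<lambda>y. (1 / real N) * (\<Sum>j<N. moreau (f j) lam y) + gam / 2 * (norm (y - x))\<^sup>2)"
    by (simp add: add.commute)
  moreover have "(1 / real N) *\<^sub>R (\<Sum>j<N. lam *\<^sub>R (v - prox (f j) lam v)) + gam *\<^sub>R (v - x)
      = (lam + gam) *\<^sub>R v - (gam *\<^sub>R x + lam *\<^sub>R avg_prox N f lam v)" for v
    using \<open>0 < N\<close>
    by (simp add: avg_prox_def sum_subtractf scaleR_diff_right sum_constant_scaleR algebra_simps
        flip: scaleR_sum_right)
  ultimately show ?thesis by simp
qed

theorem mainTheorem6:
  fixes f :: "nat \<Rightarrow> 'a::euclidean_space \<Rightarrow> real"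
    and N K kstar :: nat
    and Lf lam gam eta :: real
    and x :: 'a
    and w :: "nat \<Rightarrow> 'a"
    and \<theta> :: "nat \<Rightarrow> nat \<Rightarrow> 'a"
    and \<delta> :: "nat \<Rightarrow> real"
    and F p :: "'a \<Rightarrow> real"
  assumes N_pos: "N > 0"
    and smooth_f: "\<forall>j<N. smooth Lf (f j)"
    and lam_pos: "lam > 0"
    and gam_lam: "gam > 2 * lam"
    and lam_Lf: "2 * lam > 4 * Lf"
    and F_def: "F = (\<lambda>v. (1 / real N) * (\<Sum>j<N. moreau (f j) lam v))"
    and w0: "w 0 = x"
    and w_step: "\<forall>k<K. w (Suc k) = (1 - eta * (lam + gam)) *\<^sub>R w k + (eta * gam) *\<^sub>R x
                   + (eta * lam) *\<^sub>R ((1 / real N) *\<^sub>R (\<Sum>j<N. \<theta> k j))"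
    and inexact: "\<forall>k<K. \<forall>j<N. (norm (prox (f j) lam (w k) - \<theta> k j))\<^sup>2 \<le> \<delta> j"
    and p_def: "p = (\<lambda>y. F y + gam / 2 * (norm (y - x))\<^sup>2)"
    and kstar_lt: "kstar < K"
    and kstar_min: "\<forall>k<K. (norm (grad p (w kstar)))\<^sup>2 \<le> (norm (grad p (w k)))\<^sup>2"
    and eta_pos: "eta > 0"
    and eta_le: "eta \<le> 1 / (lam + gam)"
  shows "(norm (w kstar - prox F gam x))\<^sup>2
         \<le> 1 / (gam - lam)\<^sup>2 * (2 / (real K * eta) * (F x - moreau F gam x)
              + lam\<^sup>2 * ((1 / real N) * (\<Sum>j<N. \<delta> j)))"
proof -
  define B where "B v = gam *\<^sub>R x + lam *\<^sub>R avg_prox N f lam v" for v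
  define D where "D = (1 / real N) * (\<Sum>j<N. \<delta> j)"
  have sm: "\<And>j. j < N \<Longrightarrow> smooth Lf (f j)" and "2 * Lf < lam" and "lam < gam"
    using smooth_f lam_Lf gam_lam lam_pos by auto
  have curv: "curvature_bounds (gam - 2 * Lf) (lam + gam) (\<lambda>v. (lam + gam) *\<^sub>R v - B v) p"
    unfolding p_def F_def B_def by (rule curvature_bounds_penalized_envelope[OF N_pos sm \<open>2 * Lf < lam\<close>])
  have B_lip: "norm (B u - B v) \<le> 2 * lam * norm (u - v)" for u v
    using avg_prox_lipschitz[OF N_pos sm \<open>2 * Lf < lam\<close>, where u = u and v = v] lam_pos
    by (simp add: B_def norm_scaleR flip: scaleR_diff_right)
  obtain ys where ys: "(lam + gam) *\<^sub>R ys = B ys"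
    by (rule lipschitz_scaled_fixed_point[OF B_lip, where a = "lam + gam"])
      (use lam_pos \<open>lam < gam\<close> in auto)
  have "0 < gam - 2 * Lf" using smooth_nonneg[OF sm[OF N_pos]] \<open>2 * Lf < lam\<close> \<open>lam < gam\<close> by linarith
  moreover have stationary: "(lam + gam) *\<^sub>R ys - B ys = 0" using ys by simp
  ultimately have prox_F: "prox F gam x = ys" and moreau_F: "moreau F gam x = p ys"
    using prox_moreau_at_stationary_point[OF curv[unfolded p_def]] p_def by auto
  have "0 \<le> (gam - 2 * Lf) / 2 * (norm (w K - ys))\<^sup>2" using \<open>0 < gam - 2 * Lf\<close> by simp
  then have "p ys \<le> p (w K)"
    using curvature_bounds_stationary_growth[OF curv stationary, of "w K"] by linarith
  then have decrease: "p (w 0) - p (w K) \<le> F x - moreau F gam x"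
    using w0 moreau_F p_def by simp
  have descent: "(norm ((lam + gam) *\<^sub>R w kstar - B (w kstar)))\<^sup>2
      \<le> 2 / (real K * eta) * (p (w 0) - p (w K)) + lam\<^sup>2 * D"
  proof (rule inexact_gradient_descent_min_grad[OF curvature_bounds_upper[OF curv] eta_pos eta_le _ _ kstar_lt])
    define e where "e k = lam *\<^sub>R (avg_prox N f lam (w k) - (1 / real N) *\<^sub>R (\<Sum>j<N. \<theta> k j))" for k
    show "w (Suc k) = w k - eta *\<^sub>R ((lam + gam) *\<^sub>R w k - B (w k) + e k)" if "k < K" for k
      using w_step that unfolding e_def B_def by (simp add: algebra_simps)
    show "(norm (e k))\<^sup>2 \<le> lam\<^sup>2 * D" if "k < K" for k
    proof -
      have "(norm (avg_prox N f lam (w k) - (1 / real N) *\<^sub>R (\<Sum>j<N. \<theta> k j)))\<^sup>2 \<le> D"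
        unfolding D_def using inexact that by (intro avg_prox_inexact_sq_le[OF N_pos]) auto
      then show ?thesis unfolding e_def by (simp add: power_mult_distrib mult_left_mono)
    qed
  qed (use kstar_min curvature_bounds_grad[OF curv] in simp)
  moreover have "(gam - lam)\<^sup>2 * (norm (w kstar - ys))\<^sup>2 \<le> (norm ((lam + gam) *\<^sub>R w kstar - B (w kstar)))\<^sup>2"
    using lipschitz_perturbation_sq_norm_ge[OF B_lip _ _ ys] lam_pos \<open>lam < gam\<close> by simp
  moreover have "2 / (real K * eta) * (p (w 0) - p (w K)) \<le> 2 / (real K * eta) * (F x - moreau F gam x)"
    using decrease eta_pos by (intro mult_left_mono) auto
  ultimately have "(gam - lam)\<^sup>2 * (norm (w kstar - ys))\<^sup>2
      \<le> 2 / (real K * eta) * (F x - moreau F gam x) + lam\<^sup>2 * D"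
    by linarith
  then show ?thesis
    using \<open>lam < gam\<close> unfolding prox_F D_def by (simp add: field_simps)
qed

end
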